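(* Let $q$ be a prime power, $c\in\mathbb{F}_q^*$ and $\delta\in\mathbb{F}_{q^3}$. Then $f(x)=g(x^q-x+\delta)+cx$ is a permutation polynomial of $\mathbb{F}_{q^3}$ if one of the following holds: (i) $g(x)=u(x)^{q^2}+u(x)^q+u(x)$ for some polynomial $u(x)\in\mathbb{F}_{q^3}[x]$; (ii) $g(x)=x^{i(q^2+q+1)}$ for some positive integer $i$.
   Context: A polynomial is a permutation polynomial of a finite field if it induces a bijection of that field. $\mathbb{F}_q$ is viewed as the subfield of $\mathbb{F}_{q^3}$. *)

theory Defs
  imports "HOL-Computational_Algebra.Polynomial" "HOL-Computational_Algebra.Primes" "HOL-Library.Cardinality"
begin

definition perm_poly :: "'a::{field,finite} poly \<Rightarrow> bool" where
  "perm_poly f \<longleftrightarrow> bij (poly f)"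

definition subfield_q :: "nat \<Rightarrow> 'a::field set" where
  "subfield_q q = {x. x ^ q = x}"

end

theory Submission
  imports Defs "HOL-Algebra.Algebraic_Closure_Type" "HOL-Number_Theory.Residues"
begin

text \<open>
  Write K for the field with q^3 elements and F_q for its subfield. Both the trace-like values
  u^(q^2) + u^q + u and the norm-like values y^(q^2+q+1) are fixed by the Frobenius map
  x \<mapsto> x^q, so in either case g maps K into F_q. If f x = f y, then c (x - y) is a difference
  of two values of g and hence lies in F_q; since c is a nonzero element of F_q, so does
  d = x - y. Then x^q - x = y^q - y, the arguments of g at x and y coincide, and c x = c y.
\<close>

hide_const (open) Divisibility.prime UnivPoly.monom
  \<comment> \<open>the HOL-Algebra constants would otherwise shadow \<open>prime\<close> and \<open>monom\<close> of \<open>Defs\<close>\<close>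

lemma nat_pow_ring_of_type_algebra:
  "x [^]\<^bsub>ring_of_type_algebra\<^esub> n = (x :: 'a :: comm_ring_1) ^ n"
  by (induction n) (simp_all add: ring_of_type_algebra_def nat_pow_def mult.commute)

text \<open>The library's \<open>finite_field_power_card_eq_same\<close> needs the sort \<open>finite_field\<close>.\<close>

lemma finite_field_power_card:
  fixes x :: "'a :: {field, finite}"
  shows "x ^ CARD('a) = x"
proof (cases "x = 0")
  case False
  interpret field "ring_of_type_algebra :: 'a ring" by rule
  have units: "Units (ring_of_type_algebra :: 'a ring) = UNIV - {0}"
    using field_Units by (simp add: ring_of_type_algebra_def)
  have "x [^]\<^bsub>ring_of_type_algebra\<^esub> card (Units (ring_of_type_algebra :: 'a ring))
        = \<one>\<^bsub>ring_of_type_algebra\<^esub>"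
    by (rule units_power_order_eq_one) (use False in \<open>simp_all add: units\<close>)
  then have "x ^ (CARD('a) - 1) = 1"
    unfolding units nat_pow_ring_of_type_algebra
    by (simp add: card_Diff_singleton ring_of_type_algebra_def)
  moreover have "CARD('a) = Suc (CARD('a) - 1)"
    by (simp add: finite_UNIV_card_ge_0)
  ultimately show ?thesis
    by (metis power_Suc mult.right_neutral)
qed (simp add: finite_UNIV_card_ge_0)

lemma CHAR_eq_if_card_prime_power:
  fixes p n :: nat
  assumes "prime p" and "n > 0" and "CARD('a :: {field, finite}) = p ^ n"
  shows "CHAR('a) = p"
proof -
  have prime_char: "prime CHAR('a)"
    by (rule prime_CHAR_semidom) (simp add: finite_imp_CHAR_pos)
  have "CHAR('a) dvd p ^ n"
    using CHAR_dvd_CARD[where ?'a = 'a] assms(3) by simp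
  then have "CHAR('a) dvd p"
    using prime_char prime_dvd_power by blast
  then show ?thesis
    using prime_char assms(1) primes_dvd_imp_eq by blast
qed

lemma power_diff_if_power_add:
  fixes x y :: "'a :: comm_ring_1"
  assumes "\<And>a b :: 'a. (a + b) ^ q = a ^ q + b ^ q"
  shows "(x - y) ^ q = x ^ q - y ^ q"
  using assms[of "x - y" y] by (simp add: algebra_simps)

lemma trace_power_fixed:
  fixes a :: "'a :: comm_semiring_1"
  assumes "\<And>x y :: 'a. (x + y) ^ q = x ^ q + y ^ q" and "a ^ (q ^ 3) = a"
  shows "(a ^ (q ^ 2) + a ^ q + a) ^ q = a ^ (q ^ 2) + a ^ q + a"
proof -
  have "(a ^ (q ^ 2) + a ^ q + a) ^ q = a ^ (q ^ 3) + a ^ (q ^ 2) + a ^ q"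
    by (simp add: assms(1) flip: power_mult) (simp add: power2_eq_square power3_eq_cube)
  then show ?thesis
    using assms(2) by (simp add: add_ac)
qed

lemma norm_power_fixed:
  fixes a :: "'a :: comm_monoid_mult"
  assumes "a ^ (q ^ 3) = a"
  shows "(a ^ (q ^ 2 + q + 1)) ^ q = a ^ (q ^ 2 + q + 1)"
proof -
  have "(a ^ (q ^ 2 + q + 1)) ^ q = a ^ ((q ^ 2 + q + 1) * q)"
    by (rule power_mult[symmetric])
  also have "(q ^ 2 + q + 1) * q = q ^ 3 + q ^ 2 + q"
    by (simp add: power2_eq_square power3_eq_cube algebra_simps)
  also have "a ^ (q ^ 3 + q ^ 2 + q) = a ^ (q ^ 3) * a ^ (q ^ 2) * a ^ q"
    by (simp only: power_add)
  finally show ?thesis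
    using assms by (simp add: power_add mult_ac)
qed

lemma poly_power_fixed_if_trace_or_norm:
  fixes g :: "'a :: comm_ring_1 poly"
  assumes "\<And>x y :: 'a. (x + y) ^ q = x ^ q + y ^ q" and "\<And>x :: 'a. x ^ (q ^ 3) = x"
    and "(\<exists>u. g = u ^ (q ^ 2) + u ^ q + u) \<or> (\<exists>i. g = monom 1 (i * (q ^ 2 + q + 1)))"
  shows "poly g y ^ q = poly g y"
  using assms(3)
proof
  assume "\<exists>u. g = u ^ (q ^ 2) + u ^ q + u"
  then obtain u where "g = u ^ (q ^ 2) + u ^ q + u" ..
  then show ?thesis
    using trace_power_fixed[OF assms(1,2)] by (simp add: poly_power)
next
  assume "\<exists>i. g = monom 1 (i * (q ^ 2 + q + 1))"
  then obtain i where g: "g = monom 1 (i * (q ^ 2 + q + 1))" ..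
  have "poly g y = (y ^ (q ^ 2 + q + 1)) ^ i"
    by (simp only: g poly_monom mult.commute[of i] power_mult mult_1)
  then show ?thesis
    using norm_power_fixed[OF assms(2)] by (metis power_mult_distrib power_mult mult.commute)
qed

lemma inj_comp_artin_schreier_plus_linear:
  fixes h :: "'a :: field \<Rightarrow> 'a"
  assumes frobenius_add: "\<And>x y :: 'a. (x + y) ^ q = x ^ q + y ^ q"
    and h_fixed: "\<And>y. h y ^ q = h y"
    and "c ^ q = c" and "c \<noteq> 0"
  shows "inj (\<lambda>x. h (x ^ q - x + \<delta>) + c * x)"
proof (rule injI)
  fix x y
  assume eq: "h (x ^ q - x + \<delta>) + c * x = h (y ^ q - y + \<delta>) + c * y"
  define d where "d = x - y"
  have "c * d = h (y ^ q - y + \<delta>) - h (x ^ q - x + \<delta>)"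
    using eq by (simp add: d_def algebra_simps)
  then have "(c * d) ^ q = c * d"
    by (simp add: power_diff_if_power_add[OF frobenius_add] h_fixed)
  then have "d ^ q = d"
    using assms(3,4) by (simp add: power_mult_distrib)
  then have "x ^ q - x + \<delta> = y ^ q - y + \<delta>"
    using frobenius_add[of y d] by (simp add: d_def)
  with eq have "c * x = c * y"
    by simp
  then show "x = y"
    using assms(4) by simp
qed

theorem proposition5:
  fixes q :: nat and c \<delta> :: "'a::{field,finite}" and g :: "'a poly"
  assumes "\<exists>p k. prime p \<and> k > 0 \<and> q = p ^ k"
    and "CARD('a) = q ^ 3"
    and "c \<in> subfield_q q" and "c \<noteq> 0"
    and "(\<exists>u :: 'a poly. g = u ^ (q^2) + u ^ q + u)
         \<or> (\<exists>i::nat. i > 0 \<and> g = monom 1 (i * (q^2 + q + 1)))"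
  shows "perm_poly (pcompose g (monom 1 q - [:0, 1:] + [:\<delta>:]) + [:0, c:])"
proof -
  obtain p k where p: "prime p" and "k > 0" and q: "q = p ^ k"
    using assms(1) by blast
  have "CHAR('a) = p"
    by (rule CHAR_eq_if_card_prime_power[OF p, of "k * 3"])
       (use \<open>k > 0\<close> assms(2) q in \<open>simp_all add: power_mult\<close>)
  then have frobenius_add: "(x + y) ^ q = x ^ q + y ^ q" for x y :: 'a
    using p q by (intro freshmans_dream') simp_all
  have "x ^ (q ^ 3) = x" for x :: 'a
    using finite_field_power_card[of x] assms(2) by simp
  then have g_fixed: "poly g y ^ q = poly g y" for y
    using poly_power_fixed_if_trace_or_norm[OF frobenius_add] assms(5) by blast
  have "inj (\<lambda>x. poly g (x ^ q - x + \<delta>) + c * x)"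
    using assms(3,4) unfolding subfield_q_def
    by (intro inj_comp_artin_schreier_plus_linear[OF frobenius_add g_fixed]) simp_all
  moreover have "poly (pcompose g (monom 1 q - [:0, 1:] + [:\<delta>:]) + [:0, c:])
      = (\<lambda>x. poly g (x ^ q - x + \<delta>) + c * x)"
    by (simp add: fun_eq_iff poly_pcompose poly_monom)
  ultimately show ?thesis
    unfolding perm_poly_def bij_def by (simp add: finite_UNIV_inj_surj)
qed

end
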